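(* Under the standing assumptions, let $u\in X\setminus\{0\}$, $\zeta\in X^*\setminus\{0\}$ and $\lambda>0$. Then $u$ is a $p$-eigenvector of $J$ with subgradient $\zeta$ and eigenvalue $\lambda$ if and only if $\zeta$ is a $q$-eigenvector of $J^*$ with subgradient $u$ and eigenvalue $\mu=\lambda^{1-q}$.
   Context: Standing assumptions: $X$ is a real reflexive Banach space with dual $X^*$ and duality pairing $\langle\cdot,\cdot\rangle$; $\Gamma_0(X)$ is the class of proper, lower semi-continuous, convex functionals $X\to\mathbb{R}\cup\{+\infty\}$. Fix $1<p<\infty$ and $q=\frac{p}{p-1}$. Let $J\in\Gamma_0(X)$, and let $H\in\Gamma_0(X)$ be absolutely $p$-homogeneous ($H(tu)=|t|^pH(u)$) such that $|u|_H:=(pH(u))^{1/p}$ is a norm on $X$, so $H(u)=\frac1p|u|_H^p$. The dual norm is $|\zeta|_{H^*}=\sup_{u\ne0}\langle\zeta,u\rangle/|u|_H$, and $H^*(\zeta)=\frac1q|\zeta|_{H^*}^q$. The Fenchel conjugate is $J^*(\zeta)=\sup_{u\in X}\langle\zeta,u\rangle-J(u)$ and the subdifferential is $\partial J(u)=\{\zeta\in X^*:\ J(u)+\langle\zeta,v-u\rangle\le J(v)\ \forall v\in X\}$. Growth assumption: there is $c>0$ with $H(u)\le cJ(u)$ for all $u\in X$. The Rayleigh quotient is $R(u)=J(u)/H(u)$ for $u\ne0$ and the dual Rayleigh quotient is $R_*(\zeta)=J^*(\zeta)/H^*(\zeta)$ for $\zeta\ne0$. A $p$-eigenvector of $J$: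 $u\in X\setminus\{0\}$ with subgradient $\zeta\in\partial J(u)$ and eigenvalue $\lambda=R(u)\in\mathbb{R}$ such that $\zeta\in\lambda\,\partial H(u)$. A $q$-eigenvector of $J^*$: $\zeta\in X^*\setminus\{0\}$ with subgradient $u\in\partial J^*(\zeta)$ and eigenvalue $\mu=R_*(\zeta)\in\mathbb{R}$ such that $u\in\mu\,\partial H^*(\zeta)$. *)

theory Defs
  imports "HOL-Analysis.Analysis"
begin

text \<open>Model: X is a real Banach space (type 'a::banach); its dual X^* is the space of
bounded linear functionals bounded linear maps 'a to real; the pairing is blinfun_apply.\<close>

definition reflexive_space :: "'a::banach itself \<Rightarrow> bool" where
  "reflexive_space _ \<longleftrightarrow>
     (\<forall>\<phi> :: ('a \<Rightarrow>\<^sub>L real) \<Rightarrow>\<^sub>L real. \<exists>x::'a. \<forall>\<zeta>. blinfun_apply \<phi> \<zeta> = blinfun_apply \<zeta> x)"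

definition proper_fun :: "('a \<Rightarrow> ereal) \<Rightarrow> bool" where
  "proper_fun F \<longleftrightarrow> (\<forall>x. F x \<noteq> -\<infinity>) \<and> (\<exists>x. F x \<noteq> \<infinity>)"

definition lsc_fun :: "('a::topological_space \<Rightarrow> ereal) \<Rightarrow> bool" where
  "lsc_fun F \<longleftrightarrow> (\<forall>c::ereal. closed {x. F x \<le> c})"

definition convex_fun :: "('a::real_vector \<Rightarrow> ereal) \<Rightarrow> bool" where
  "convex_fun F \<longleftrightarrow> (\<forall>x y. \<forall>t::real. 0 \<le> t \<and> t \<le> 1 \<longrightarrow>
      F ((1 - t) *\<^sub>R x + t *\<^sub>R y) \<le> ereal (1 - t) * F x + ereal t * F y)"

definition Gamma0 :: "('a::real_normed_vector \<Rightarrow> ereal) \<Rightarrow> bool" where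
  "Gamma0 F \<longleftrightarrow> proper_fun F \<and> lsc_fun F \<and> convex_fun F"

definition fconj :: "('a::real_normed_vector \<Rightarrow> ereal) \<Rightarrow> ('a \<Rightarrow>\<^sub>L real) \<Rightarrow> ereal" where
  "fconj F \<zeta> = (SUP u. ereal (blinfun_apply \<zeta> u) - F u)"

definition subdiff :: "('a::real_normed_vector \<Rightarrow> ereal) \<Rightarrow> 'a \<Rightarrow> ('a \<Rightarrow>\<^sub>L real) set" where
  "subdiff F u = {\<zeta>. \<forall>v. F u + ereal (blinfun_apply \<zeta> (v - u)) \<le> F v}"

text \<open>Subdifferential of a functional on X^*, viewed (via reflexivity X^** = X) as a subset of X.\<close>
definition dsubdiff :: "(('a::real_normed_vector \<Rightarrow>\<^sub>L real) \<Rightarrow> ereal) \<Rightarrow> ('a \<Rightarrow>\<^sub>L real) \<Rightarrow> 'a set" where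
  "dsubdiff G \<zeta> = {u. \<forall>\<eta>. G \<zeta> + ereal (blinfun_apply (\<eta> - \<zeta>) u) \<le> G \<eta>}"

definition abs_p_homogeneous :: "real \<Rightarrow> ('a::real_vector \<Rightarrow> ereal) \<Rightarrow> bool" where
  "abs_p_homogeneous p H \<longleftrightarrow> (\<forall>t u. H (t *\<^sub>R u) = ereal (\<bar>t\<bar> powr p) * H u)"

definition Hnorm :: "real \<Rightarrow> ('a \<Rightarrow> ereal) \<Rightarrow> 'a \<Rightarrow> real" where
  "Hnorm p H u = (p * real_of_ereal (H u)) powr (1 / p)"

definition H_is_norm :: "real \<Rightarrow> ('a::real_vector \<Rightarrow> ereal) \<Rightarrow> bool" where
  "H_is_norm p H \<longleftrightarrow> (\<forall>u. H u \<noteq> \<infinity> \<and> H u \<noteq> -\<infinity> \<and> H u \<ge> 0)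
     \<and> (\<forall>u. Hnorm p H u = 0 \<longleftrightarrow> u = 0)
     \<and> (\<forall>u v. Hnorm p H (u + v) \<le> Hnorm p H u + Hnorm p H v)
     \<and> (\<forall>t u. Hnorm p H (t *\<^sub>R u) = \<bar>t\<bar> * Hnorm p H u)"

definition rayleigh :: "('a \<Rightarrow> ereal) \<Rightarrow> ('a \<Rightarrow> ereal) \<Rightarrow> 'a \<Rightarrow> ereal" where
  "rayleigh J H u = J u / H u"

definition dual_rayleigh :: "('a::real_normed_vector \<Rightarrow> ereal) \<Rightarrow> ('a \<Rightarrow> ereal) \<Rightarrow> ('a \<Rightarrow>\<^sub>L real) \<Rightarrow> ereal" where
  "dual_rayleigh J H \<zeta> = fconj J \<zeta> / fconj H \<zeta>"

definition p_eigenvector :: "('a::real_normed_vector \<Rightarrow> ereal) \<Rightarrow> ('a \<Rightarrow> ereal) \<Rightarrow> 'a \<Rightarrow> ('a \<Rightarrow>\<^sub>L real) \<Rightarrow> real \<Rightarrow> bool" where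
  "p_eigenvector J H u \<zeta> lam \<longleftrightarrow> u \<noteq> 0 \<and> \<zeta> \<in> subdiff J u \<and> rayleigh J H u = ereal lam
      \<and> \<zeta> \<in> (\<lambda>\<eta>. lam *\<^sub>R \<eta>) ` subdiff H u"

definition q_eigenvector :: "('a::real_normed_vector \<Rightarrow> ereal) \<Rightarrow> ('a \<Rightarrow> ereal) \<Rightarrow> ('a \<Rightarrow>\<^sub>L real) \<Rightarrow> 'a \<Rightarrow> real \<Rightarrow> bool" where
  "q_eigenvector J H \<zeta> u mu \<longleftrightarrow> \<zeta> \<noteq> 0 \<and> u \<in> dsubdiff (fconj J) \<zeta> \<and> dual_rayleigh J H \<zeta> = ereal mu
      \<and> u \<in> (\<lambda>v. mu *\<^sub>R v) ` dsubdiff (fconj H) \<zeta>"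

end

theory Submission
  imports Defs
begin

(* For J in Gamma0, the Fenchel-Moreau theorem (obtained here from a Hahn-Banach separation
   of the closed convex epigraph) makes the subdifferential of J^* the inverse of that of J,
   so zeta \<in> \<partial>J(u) iff u \<in> \<partial>J^*(zeta).  Subgradients of the p-homogeneous H scale as
   \<partial>H(s u) = s^(p-1) \<partial>H(u); with s = lam^(q-1), so that s^(p-1) = lam and 1/s = lam^(1-q),
   the condition zeta \<in> lam \<partial>H(u) becomes zeta \<in> \<partial>H(s u), i.e. s u \<in> \<partial>H^*(zeta), i.e.
   u \<in> lam^(1-q) \<partial>H^*(zeta).  Finally Euler's identity <eta, v> = p H(v) for eta \<in> \<partial>H(v)
   and the Fenchel-Young equalities J^*(zeta) = <zeta, u> - J(u), H^*(zeta) = (p-1) H(s u)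
   turn R(u) = lam into R_*(zeta) = lam^(1-q) and back. *)

section \<open>Sublinear functionals and separation\<close>

definition sublinear :: "('a::real_vector \<Rightarrow> real) \<Rightarrow> bool" where
  "sublinear q \<longleftrightarrow> (\<forall>x y. q (x + y) \<le> q x + q y) \<and> (\<forall>t x. 0 \<le> t \<longrightarrow> q (t *\<^sub>R x) = t * q x)"

lemma sublinear_add: "sublinear q \<Longrightarrow> q (x + y) \<le> q x + q y"
  unfolding sublinear_def by blast

lemma sublinear_scaleR: "sublinear q \<Longrightarrow> 0 \<le> t \<Longrightarrow> q (t *\<^sub>R x) = t * q x"
  unfolding sublinear_def by blast

lemma sublinear_zero: "sublinear q \<Longrightarrow> q 0 = 0"
  using sublinear_scaleR[of q 0 0] by simp

lemma sublinear_minus_le: "sublinear q \<Longrightarrow> - q (- x) \<le> q x"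
  using sublinear_add[of q x "- x"] sublinear_zero[of q] by simp

lemma INF_add_le:
  fixes g :: "'a::plus \<Rightarrow> 'i \<Rightarrow> real"
  assumes ne: "I \<noteq> {}" and bdd: "\<And>x. bdd_below (g x ` I)"
    and add: "\<And>i j. i \<in> I \<Longrightarrow> j \<in> I \<Longrightarrow> \<exists>k\<in>I. g (x + y) k \<le> g x i + g y j"
  shows "(INF k\<in>I. g (x + y) k) \<le> (INF i\<in>I. g x i) + (INF j\<in>I. g y j)"
proof -
  let ?m = "\<lambda>x. INF i\<in>I. g x i"
  have "?m (x + y) - g y j \<le> ?m x" if j: "j \<in> I" for j
  proof (rule cINF_greatest[OF ne])
    fix i assume "i \<in> I"
    then obtain k where "k \<in> I" "g (x + y) k \<le> g x i + g y j" using add j by blast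
    then show "?m (x + y) - g y j \<le> g x i" using cINF_lower[OF bdd, of k "x + y"] by linarith
  qed
  then have "?m (x + y) - ?m x \<le> ?m y"
    by (intro cINF_greatest[OF ne]) (simp add: algebra_simps)
  then show ?thesis by linarith
qed

lemma INF_scaleR_eq:
  fixes g :: "'a::real_vector \<Rightarrow> 'i \<Rightarrow> real"
  assumes ne: "I \<noteq> {}" and bdd: "\<And>x. bdd_below (g x ` I)"
    and scale: "\<And>t x i. 0 < t \<Longrightarrow> i \<in> I \<Longrightarrow> \<exists>j\<in>I. g (t *\<^sub>R x) j \<le> t * g x i"
    and t: "0 < t"
  shows "(INF i\<in>I. g (t *\<^sub>R x) i) = t * (INF i\<in>I. g x i)"
proof -
  let ?m = "\<lambda>x. INF i\<in>I. g x i"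
  have le: "?m (t *\<^sub>R x) \<le> t * ?m x" if t: "0 < t" for t x
  proof -
    have "?m (t *\<^sub>R x) / t \<le> ?m x"
    proof (rule cINF_greatest[OF ne])
      fix i assume "i \<in> I"
      then obtain j where "j \<in> I" "g (t *\<^sub>R x) j \<le> t * g x i" using scale t by blast
      then have "?m (t *\<^sub>R x) \<le> t * g x i" using cINF_lower[OF bdd] order_trans by blast
      then show "?m (t *\<^sub>R x) / t \<le> g x i" using t by (simp add: divide_le_eq mult.commute)
    qed
    then show ?thesis using t by (simp add: divide_le_eq mult.commute)
  qed
  have "?m x \<le> inverse t * ?m (t *\<^sub>R x)"
    using le[of "inverse t" "t *\<^sub>R x"] t by simp
  then have "t * ?m x \<le> ?m (t *\<^sub>R x)"
    using t by (simp add: field_simps)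
  then show ?thesis using le[OF t, of x] by simp
qed

lemma sublinear_INF:
  fixes g :: "'a::real_vector \<Rightarrow> 'i \<Rightarrow> real"
  assumes ne: "I \<noteq> {}" and bdd: "\<And>x. bdd_below (g x ` I)"
    and add: "\<And>x y i j. i \<in> I \<Longrightarrow> j \<in> I \<Longrightarrow> \<exists>k\<in>I. g (x + y) k \<le> g x i + g y j"
    and scale: "\<And>t x i. 0 < t \<Longrightarrow> i \<in> I \<Longrightarrow> \<exists>j\<in>I. g (t *\<^sub>R x) j \<le> t * g x i"
  shows "sublinear (\<lambda>x. INF i\<in>I. g x i)"
proof -
  let ?m = "\<lambda>x. INF i\<in>I. g x i"
  have "?m 0 = 0"
    using INF_scaleR_eq[OF ne bdd scale, of 2 0] by simp
  then have "?m (t *\<^sub>R x) = t * ?m x" if "0 \<le> t" for t x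
    using INF_scaleR_eq[OF ne bdd scale, of t x] that by (cases "t = 0") auto
  moreover have "?m (x + y) \<le> ?m x + ?m y" for x y
    by (rule INF_add_le[OF ne bdd]) (rule add)
  ultimately show ?thesis
    unfolding sublinear_def by blast
qed

lemma sublinear_INF_shift:
  fixes q :: "'a::real_vector \<Rightarrow> real" and y :: 'a
  assumes q: "sublinear q"
  defines "r \<equiv> \<lambda>x. INF t\<in>{0..}. q (x + t *\<^sub>R y) - t * q y"
  shows "sublinear r" and "0 \<le> t \<Longrightarrow> r x \<le> q (x + t *\<^sub>R y) - t * q y"
proof -
  have bdd: "bdd_below ((\<lambda>t. q (x + t *\<^sub>R y) - t * q y) ` {0..})" for x
  proof (rule bdd_belowI2)
    fix t :: real assume "t \<in> {0..}"
    then have "t * q y = q ((x + t *\<^sub>R y) + - x)" using sublinear_scaleR[OF q] by simp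
    also have "\<dots> \<le> q (x + t *\<^sub>R y) + q (- x)" using sublinear_add[OF q] .
    finally show "- q (- x) \<le> q (x + t *\<^sub>R y) - t * q y" by simp
  qed
  show "0 \<le> t \<Longrightarrow> r x \<le> q (x + t *\<^sub>R y) - t * q y"
    unfolding r_def using cINF_lower[OF bdd, of t x] by simp
  show "sublinear r"
    unfolding r_def
  proof (rule sublinear_INF[OF _ bdd])
    fix x1 x2 and t1 t2 :: real assume "t1 \<in> {0..}" "t2 \<in> {0..}"
    then show "\<exists>t\<in>{0..}. q (x1 + x2 + t *\<^sub>R y) - t * q y
                 \<le> q (x1 + t1 *\<^sub>R y) - t1 * q y + (q (x2 + t2 *\<^sub>R y) - t2 * q y)"
      using sublinear_add[OF q, of "x1 + t1 *\<^sub>R y" "x2 + t2 *\<^sub>R y"]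
      by (intro bexI[of _ "t1 + t2"]) (auto simp: algebra_simps)
  next
    fix s t :: real and x assume "0 < s" "t \<in> {0..}"
    then show "\<exists>t'\<in>{0..}. q (s *\<^sub>R x + t' *\<^sub>R y) - t' * q y \<le> s * (q (x + t *\<^sub>R y) - t * q y)"
      using sublinear_scaleR[OF q, of s "x + t *\<^sub>R y"]
      by (intro bexI[of _ "s * t"]) (auto simp: algebra_simps)
  qed simp
qed

lemma sublinear_minimal_imp_linear:
  fixes q :: "'a::real_vector \<Rightarrow> real"
  assumes q: "sublinear q" and minimal: "\<And>r. sublinear r \<Longrightarrow> r \<le> q \<Longrightarrow> r = q"
  shows "linear q"
proof -
  have q_minus: "q (- y) = - q y" for y
  proof -
    let ?r = "\<lambda>x. INF t\<in>{0..}. q (x + t *\<^sub>R y) - t * q y"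
    have "?r \<le> q"
      using sublinear_INF_shift(2)[OF q, where t = 0 and y = y] by (simp add: le_fun_def)
    then have "?r = q" by (rule minimal[OF sublinear_INF_shift(1)[OF q]])
    then have "q (- y) \<le> q (- y + 1 *\<^sub>R y) - 1 * q y"
      using sublinear_INF_shift(2)[OF q, where t = 1 and y = y and x = "- y"] fun_cong[of ?r q "- y"]
      by simp
    then show ?thesis
      using sublinear_minus_le[OF q, of y] sublinear_zero[OF q] by simp
  qed
  have q_add: "q (x + y) = q x + q y" for x y
    using sublinear_add[OF q, of x y] sublinear_add[OF q, of "x + y" "- y"] q_minus[of y] by simp
  have q_scale: "q (t *\<^sub>R x) = t * q x" for t x
  proof (cases "0 \<le> t")
    case False
    then show ?thesis
      using sublinear_scaleR[OF q, of "- t" x] q_minus[of "t *\<^sub>R x"] by simp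
  qed (rule sublinear_scaleR[OF q])
  show ?thesis
    by (rule linearI) (simp_all add: q_add q_scale)
qed

lemma sublinear_INF_chain:
  fixes p :: "'a::real_vector \<Rightarrow> real"
  assumes "C \<noteq> {}" and p: "sublinear p" and C: "\<And>q. q \<in> C \<Longrightarrow> sublinear q \<and> q \<le> p"
    and total: "\<And>q1 q2. q1 \<in> C \<Longrightarrow> q2 \<in> C \<Longrightarrow> q1 \<le> q2 \<or> q2 \<le> q1"
  shows "sublinear (\<lambda>x. INF q\<in>C. q x)" and "q \<in> C \<Longrightarrow> (INF q\<in>C. q x) \<le> q x"
proof -
  have bdd: "bdd_below ((\<lambda>q. q x) ` C)" for x
  proof (rule bdd_belowI2)
    fix q assume "q \<in> C"
    then show "- p (- x) \<le> q x"
      using C sublinear_minus_le[of q x] le_funD[of q p "- x"] by fastforce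
  qed
  then show "q \<in> C \<Longrightarrow> (INF q\<in>C. q x) \<le> q x" by (rule cINF_lower)
  show "sublinear (\<lambda>x. INF q\<in>C. q x)"
  proof (rule sublinear_INF[OF assms(1) bdd])
    fix x y and q1 q2 assume q12: "q1 \<in> C" "q2 \<in> C"
    then have "sublinear q1" "sublinear q2" using C by auto
    then show "\<exists>q\<in>C. q (x + y) \<le> q1 x + q2 y"
      using total[OF q12] q12 sublinear_add le_funD
      by (metis (no_types, opaque_lifting) order_trans add_left_mono add_right_mono)
  next
    fix t :: real and x q assume "0 < t" "q \<in> C"
    moreover from this have "q (t *\<^sub>R x) = t * q x"
      using C sublinear_scaleR[of q t x] by auto
    ultimately show "\<exists>q'\<in>C. q' (t *\<^sub>R x) \<le> t * q x"
      by (metis order_refl)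
  qed
qed

lemma sublinear_dominates_linear:
  fixes p :: "'a::real_vector \<Rightarrow> real"
  assumes p: "sublinear p"
  obtains f where "linear f" and "f \<le> p"
proof -
  define A where "A = {q. sublinear q \<and> q \<le> p}"
  have po: "partial_order_on A (relation_of (\<lambda>q r. r \<le> q) A)"
  proof (rule partial_order_on_relation_ofI)
    show "q \<le> q" for q :: "'a \<Rightarrow> real" by (rule order_refl)
    show "s \<le> q" if "r \<le> q" "s \<le> r" for q r s :: "'a \<Rightarrow> real" using that by (rule order_trans[rotated])
    show "q = r" if "r \<le> q" "q \<le> r" for q r :: "'a \<Rightarrow> real" using that by (rule antisym[rotated])
  qed
  have "\<exists>m\<in>A. \<forall>q\<in>A. q \<le> m \<longrightarrow> q = m"
  proof (rule predicate_Zorn[OF po])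
    fix C assume C: "C \<in> Chains (relation_of (\<lambda>q r. r \<le> q) A)"
    have CA: "C \<subseteq> A" using C by (rule Chains_relation_of)
    show "\<exists>m\<in>A. \<forall>q\<in>C. m \<le> q"
    proof (cases "C = {}")
      case True
      then show ?thesis using p by (auto simp: A_def)
    next
      case False
      define m where "m x = (INF q\<in>C. q x)" for x
      have sub: "sublinear q \<and> q \<le> p" if "q \<in> C" for q using that CA by (auto simp: A_def)
      have total: "q1 \<le> q2 \<or> q2 \<le> q1" if "q1 \<in> C" "q2 \<in> C" for q1 q2
        using C that unfolding Chains_def relation_of_def by auto
      have "sublinear m"
        unfolding m_def using sublinear_INF_chain(1)[OF False p sub total] .
      moreover have m_le: "m \<le> q" if "q \<in> C" for q
        unfolding m_def le_fun_def using sublinear_INF_chain(2)[OF False p sub total that] by blast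
      moreover have "m \<le> p"
      proof -
        obtain q where "q \<in> C" using False by blast
        then show ?thesis using m_le CA order_trans unfolding A_def by blast
      qed
      ultimately show ?thesis unfolding A_def by blast
    qed
  qed
  then obtain m where m: "sublinear m" "m \<le> p" and minimal: "\<And>q. q \<in> A \<Longrightarrow> q \<le> m \<Longrightarrow> q = m"
    unfolding A_def by blast
  have "linear m"
  proof (rule sublinear_minimal_imp_linear[OF m(1)])
    fix r assume "sublinear r" "r \<le> m"
    then show "r = m" using minimal m(2) order_trans unfolding A_def by blast
  qed
  then show ?thesis using that m(2) by blast
qed

text \<open>Every linear functional below the gauge separates \<open>z\<close> from \<open>S\<close> with margin \<open>d\<close>:
  at \<open>x = z - c\<close> the choice \<open>(s, c) = (1, c)\<close> bounds the gauge by \<open>-d\<close>.\<close>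

definition separation_gauge :: "'a::real_normed_vector set \<Rightarrow> 'a \<Rightarrow> real \<Rightarrow> 'a \<Rightarrow> real" where
  "separation_gauge S z d x = (INF (s, c)\<in>{0..} \<times> S. norm (x + s *\<^sub>R (c - z)) - s * d)"

lemma bdd_below_separation_gauge:
  assumes "\<And>c. c \<in> S \<Longrightarrow> d \<le> norm (c - z)"
  shows "bdd_below ((\<lambda>(s, c). norm (x + s *\<^sub>R (c - z)) - s * d) ` ({0..} \<times> S))"
proof (rule bdd_belowI2)
  fix sc :: "real \<times> 'a" assume "sc \<in> {0..} \<times> S"
  then obtain s c where sc: "sc = (s, c)" "0 \<le> s" "c \<in> S" by auto
  have "s * d \<le> norm (s *\<^sub>R (c - z))" using assms[OF sc(3)] sc(2) by (simp add: mult_left_mono)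
  also have "\<dots> \<le> norm x + norm (x + s *\<^sub>R (c - z))"
    by (metis add_diff_cancel_left' norm_triangle_ineq4 add.commute)
  finally show "- norm x \<le> (\<lambda>(s, c). norm (x + s *\<^sub>R (c - z)) - s * d) sc" unfolding sc by simp
qed

lemma separation_gauge_le:
  assumes "\<And>c. c \<in> S \<Longrightarrow> d \<le> norm (c - z)" and "0 \<le> s" and "c \<in> S"
  shows "separation_gauge S z d x \<le> norm (x + s *\<^sub>R (c - z)) - s * d"
proof -
  have "(s, c) \<in> {0..} \<times> S" using assms(2,3) by simp
  from cINF_lower[OF bdd_below_separation_gauge[OF assms(1)] this] show ?thesis
    unfolding separation_gauge_def by simp
qed

lemma convex_cone_add:
  assumes "convex S" and "c1 \<in> S" and "c2 \<in> S" and "0 \<le> s1" and "0 \<le> s2"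
  obtains c where "c \<in> S" and "s1 *\<^sub>R (c1 - z) + s2 *\<^sub>R (c2 - z) = (s1 + s2) *\<^sub>R (c - z)"
proof (cases "s1 + s2 = 0")
  case True
  then have "s1 = 0" "s2 = 0" using assms by auto
  then show ?thesis using assms that[of c1] by simp
next
  case False
  then have s: "0 < s1 + s2" using assms by simp
  define c where "c = (s1 / (s1 + s2)) *\<^sub>R c1 + (s2 / (s1 + s2)) *\<^sub>R c2"
  have "c \<in> S"
    unfolding c_def using s assms by (intro convexD[OF assms(1)]) (auto simp: add_divide_distrib[symmetric])
  moreover have "(s1 + s2) *\<^sub>R c = s1 *\<^sub>R c1 + s2 *\<^sub>R c2"
    unfolding c_def using s by (simp add: scaleR_add_right)
  then have "s1 *\<^sub>R (c1 - z) + s2 *\<^sub>R (c2 - z) = (s1 + s2) *\<^sub>R (c - z)"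
    by (simp add: algebra_simps)
  ultimately show ?thesis by (rule that)
qed

lemma sublinear_separation_gauge:
  fixes S :: "'a::real_normed_vector set"
  assumes "convex S" and "S \<noteq> {}" and dist: "\<And>c. c \<in> S \<Longrightarrow> d \<le> norm (c - z)"
  shows "sublinear (separation_gauge S z d)"
  unfolding separation_gauge_def[abs_def]
proof (rule sublinear_INF[OF _ bdd_below_separation_gauge[OF dist]])
  show "{0::real..} \<times> S \<noteq> {}" using assms(2) by auto
next
  fix x y and sc1 sc2 :: "real \<times> 'a" assume "sc1 \<in> {0..} \<times> S" "sc2 \<in> {0..} \<times> S"
  then obtain s1 c1 s2 c2 where sc: "sc1 = (s1, c1)" "sc2 = (s2, c2)" "0 \<le> s1" "0 \<le> s2" "c1 \<in> S" "c2 \<in> S"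
    by auto
  then obtain c where "c \<in> S" and c: "s1 *\<^sub>R (c1 - z) + s2 *\<^sub>R (c2 - z) = (s1 + s2) *\<^sub>R (c - z)"
    using convex_cone_add[OF assms(1)] by metis
  let ?g = "\<lambda>x (s, c). norm (x + s *\<^sub>R (c - z)) - s * d"
  have "x + y + (s1 + s2) *\<^sub>R (c - z) = (x + s1 *\<^sub>R (c1 - z)) + (y + s2 *\<^sub>R (c2 - z))"
    unfolding c[symmetric] by (simp add: algebra_simps)
  then have "?g (x + y) (s1 + s2, c) \<le> ?g x sc1 + ?g y sc2"
    unfolding sc using norm_triangle_ineq[of "x + s1 *\<^sub>R (c1 - z)" "y + s2 *\<^sub>R (c2 - z)"]
    by (simp add: algebra_simps)
  then show "\<exists>sc\<in>{0..} \<times> S. ?g (x + y) sc \<le> ?g x sc1 + ?g y sc2"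
    using \<open>c \<in> S\<close> sc by force
next
  fix t :: real and x and sc :: "real \<times> 'a" assume t: "0 < t" and "sc \<in> {0..} \<times> S"
  then obtain s c where sc: "sc = (s, c)" "0 \<le> s" "c \<in> S" by auto
  have scale: "t *\<^sub>R x + (t * s) *\<^sub>R (c - z) = t *\<^sub>R (x + s *\<^sub>R (c - z))"
    by (simp add: scaleR_add_right)
  have "norm (t *\<^sub>R x + (t * s) *\<^sub>R (c - z)) - (t * s) * d = t * (norm (x + s *\<^sub>R (c - z)) - s * d)"
    unfolding scale using t by (simp add: right_diff_distrib)
  then show "\<exists>sc'\<in>{0..} \<times> S. (\<lambda>(s, c). norm (t *\<^sub>R x + s *\<^sub>R (c - z)) - s * d) sc'
               \<le> t * (\<lambda>(s, c). norm (x + s *\<^sub>R (c - z)) - s * d) sc"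
    using t sc by (intro bexI[of _ "(t * s, c)"]) auto
qed

lemma closed_convex_separation:
  fixes S :: "'a::real_normed_vector set"
  assumes "convex S" and "closed S" and "z \<notin> S" and "S \<noteq> {}"
  obtains f :: "'a \<Rightarrow> real" and d :: real
  where "bounded_linear f" and "0 < d" and "\<And>c. c \<in> S \<Longrightarrow> f z + d \<le> f c"
proof -
  obtain d where d: "0 < d" "ball z d \<subseteq> - S"
    using assms(2,3) open_contains_ball[of "- S"] by blast
  have dist: "d \<le> norm (c - z)" if "c \<in> S" for c
  proof -
    have "c \<notin> ball z d" using d that by blast
    then show ?thesis by (simp add: dist_norm norm_minus_commute)
  qed
  obtain f where f: "linear f" and f_le: "f \<le> separation_gauge S z d"
    using sublinear_separation_gauge[OF assms(1,4) dist] by (rule sublinear_dominates_linear)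
  obtain c0 where c0: "c0 \<in> S" using assms(4) by blast
  have f_le_norm: "f x \<le> norm x" for x
    using le_funD[OF f_le, of x] separation_gauge_le[OF dist order_refl c0, of x] by simp
  have bounded: "bounded_linear f"
  proof (rule bounded_linear_intro[where K = 1])
    show "norm (f x) \<le> norm x * 1" for x
      using f_le_norm[of x] f_le_norm[of "- x"] linear_neg[OF f, of x] by simp
  qed (simp_all add: linear_add[OF f] linear_scale[OF f])
  have separates: "f z + d \<le> f c" if "c \<in> S" for c
    using le_funD[OF f_le, of "z - c"] separation_gauge_le[OF dist zero_le_one that, of "z - c"]
      linear_diff[OF f, of z c]
    by simp
  show ?thesis using bounded d(1) separates by (rule that)
qed

section \<open>Fenchel conjugates\<close>

lemma convex_fun_epigraph:
  assumes "convex_fun F"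
  shows "convex {(y, s::real). F y \<le> ereal s}"
  unfolding convex_alt
proof (clarsimp)
  fix y1 y2 :: 'a and s1 s2 u :: real
  assume le: "F y1 \<le> ereal s1" "F y2 \<le> ereal s2" and u: "0 \<le> u" "u \<le> 1"
  have "F ((1 - u) *\<^sub>R y1 + u *\<^sub>R y2) \<le> ereal (1 - u) * F y1 + ereal u * F y2"
    using assms u unfolding convex_fun_def by blast
  also have "\<dots> \<le> ereal (1 - u) * ereal s1 + ereal u * ereal s2"
    using u le by (intro add_mono ereal_mult_left_mono) auto
  finally show "F ((1 - u) *\<^sub>R y1 + u *\<^sub>R y2) \<le> ereal ((1 - u) * s1 + u * s2)"
    by simp
qed

lemma lsc_fun_closed_epigraph:
  assumes "lsc_fun F"
  shows "closed {(y, s::real). F y \<le> ereal s}"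
  unfolding closed_def
proof (rule open_prod_intro)
  fix ys assume "ys \<in> - {(y, s). F y \<le> ereal s}"
  then obtain y s where ys: "ys = (y, s)" and "ereal s < F y" by (cases ys) auto
  then obtain c where c: "s < c" "ereal c < F y"
    using ereal_dense2[of "ereal s" "F y"] by auto
  show "\<exists>A B. open A \<and> open B \<and> ys \<in> A \<times> B \<and> A \<times> B \<subseteq> - {(y, s). F y \<le> ereal s}"
  proof (intro exI conjI)
    show "open (- {x. F x \<le> ereal c})" using assms unfolding lsc_fun_def by blast
    show "ys \<in> (- {x. F x \<le> ereal c}) \<times> {..<c}" using ys c by auto
    show "(- {x. F x \<le> ereal c}) \<times> {..<c} \<subseteq> - {(y, s). F y \<le> ereal s}"
    proof
      fix ys' assume "ys' \<in> (- {x. F x \<le> ereal c}) \<times> {..<c}"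
      then obtain y' s' where "ys' = (y', s')" "\<not> F y' \<le> ereal c" "s' < c"
        by blast
      then show "ys' \<in> - {(y, s). F y \<le> ereal s}"
        using order_trans[of "F y'" "ereal s'" "ereal c"] by auto
    qed
  qed simp
qed

lemma fconj_upper: "ereal (blinfun_apply \<eta> y) - F y \<le> fconj F \<eta>"
  unfolding fconj_def by (rule SUP_upper) simp

lemma fconj_least: "(\<And>y. ereal (blinfun_apply \<eta> y) - F y \<le> c) \<Longrightarrow> fconj F \<eta> \<le> c"
  unfolding fconj_def by (rule SUP_least)

lemma proper_fconj_leI:
  assumes "proper_fun F" and "\<And>y s. F y = ereal s \<Longrightarrow> blinfun_apply \<eta> y - s \<le> c"
  shows "fconj F \<eta> \<le> ereal c"
proof (rule fconj_least)
  fix y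
  show "ereal (blinfun_apply \<eta> y) - F y \<le> ereal c"
    using assms unfolding proper_fun_def by (cases "F y") auto
qed

lemma proper_fun_finite_point:
  assumes "proper_fun F"
  obtains x a where "F x = ereal a"
  using assms unfolding proper_fun_def by (metis ereal_cases)

lemma Gamma0_epigraph_separation:
  fixes F :: "'a::real_normed_vector \<Rightarrow> ereal"
  assumes F: "Gamma0 F" and "ereal r < F x"
  obtains \<phi> :: "'a \<Rightarrow>\<^sub>L real" and \<alpha> d
  where "0 < d" and "0 \<le> \<alpha>" and "\<And>y s. F y \<le> ereal s \<Longrightarrow> \<phi> x + \<alpha> * r + d \<le> \<phi> y + \<alpha> * s"
proof -
  let ?E = "{(y, s::real). F y \<le> ereal s}"
  obtain x0 a where a: "F x0 = ereal a"
    using F proper_fun_finite_point unfolding Gamma0_def by blast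
  have "(x0, a) \<in> ?E" using a by simp
  moreover have "(x, r) \<notin> ?E" using assms(2) by simp
  ultimately obtain g :: "'a \<times> real \<Rightarrow> real" and d :: real
    where g: "bounded_linear g" "0 < d" "\<And>c. c \<in> ?E \<Longrightarrow> g (x, r) + d \<le> g c"
    using closed_convex_separation[OF convex_fun_epigraph lsc_fun_closed_epigraph] F
    unfolding Gamma0_def by blast
  define \<phi> where "\<phi> = Blinfun (\<lambda>y. g (y, 0))"
  define \<alpha> where "\<alpha> = g (0, 1)"
  have "bounded_linear (\<lambda>y. g (y, 0))"
    using bounded_linear_compose[OF g(1) bounded_linear_Pair[OF bounded_linear_ident bounded_linear_zero]] .
  then have g_split: "g (y, s) = \<phi> y + \<alpha> * s" for y s
    using linear_add[OF bounded_linear.linear[OF g(1)], of "(y, 0)" "(0, s)"]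
      linear_scale[OF bounded_linear.linear[OF g(1)], of s "(0, 1)"]
    unfolding \<phi>_def \<alpha>_def by (simp add: bounded_linear_Blinfun_apply)
  have sep: "\<phi> x + \<alpha> * r + d \<le> \<phi> y + \<alpha> * s" if "F y \<le> ereal s" for y s
    using g(3)[of "(y, s)"] that g_split by simp
  have "0 \<le> \<alpha>"
  proof (rule ccontr)
    assume "\<not> 0 \<le> \<alpha>"
    then have neg: "\<alpha> < 0" by simp
    define t where "t = (\<phi> x + \<alpha> * r - \<phi> x0) / \<alpha>"
    have "\<alpha> * max a t \<le> \<alpha> * t" using neg by (simp add: mult_left_mono_neg)
    also have "\<alpha> * t = \<phi> x + \<alpha> * r - \<phi> x0" unfolding t_def using neg by simp
    finally show False using sep[of x0 "max a t"] a g(2) by simp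
  qed
  then show ?thesis using that g(2) sep by blast
qed

lemma fconj_witness_of_nonvertical_separation:
  fixes F :: "'a::real_normed_vector \<Rightarrow> ereal" and \<phi> :: "'a \<Rightarrow>\<^sub>L real"
  assumes "proper_fun F" and \<alpha>: "0 < \<alpha>" and "0 < d"
    and sep: "\<And>y s. F y \<le> ereal s \<Longrightarrow> \<phi> x + \<alpha> * r + d \<le> \<phi> y + \<alpha> * s"
  shows "\<exists>\<eta>. ereal r < ereal (blinfun_apply \<eta> x) - fconj F \<eta>"
proof -
  define \<eta> where "\<eta> = (- 1 / \<alpha>) *\<^sub>R \<phi>"
  have \<eta>: "blinfun_apply \<eta> y = - \<phi> y / \<alpha>" for y
    unfolding \<eta>_def by (simp add: scaleR_blinfun.rep_eq uminus_blinfun.rep_eq)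
  have "fconj F \<eta> \<le> ereal (\<eta> x - r - d / \<alpha>)"
  proof (rule proper_fconj_leI[OF assms(1)])
    fix y s assume "F y = ereal s"
    then have "0 \<le> (\<phi> y + \<alpha> * s - (\<phi> x + \<alpha> * r + d)) / \<alpha>" using sep \<alpha> by simp
    also have "\<dots> = (\<eta> x - r - d / \<alpha>) - (\<eta> y - s)"
      unfolding \<eta> using \<alpha> by (simp add: field_simps)
    finally show "\<eta> y - s \<le> \<eta> x - r - d / \<alpha>" by simp
  qed
  moreover have "0 < d / \<alpha>" using \<alpha> \<open>0 < d\<close> by simp
  ultimately have "ereal r < ereal (\<eta> x) - fconj F \<eta>"
    by (cases "fconj F \<eta>") auto
  then show ?thesis by blast
qed

lemma Gamma0_fconj_finite_point:
  fixes F :: "'a::real_normed_vector \<Rightarrow> ereal"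
  assumes F: "Gamma0 F"
  obtains \<eta> b where "fconj F \<eta> = ereal b"
proof -
  have proper: "proper_fun F" using F unfolding Gamma0_def by blast
  obtain x0 a where a: "F x0 = ereal a" using proper by (rule proper_fun_finite_point)
  then have "ereal (a - 1) < F x0" by simp
  then obtain \<phi> :: "'a \<Rightarrow>\<^sub>L real" and \<alpha> d where d: "0 < d" and "0 \<le> \<alpha>"
    and sep: "\<And>y s. F y \<le> ereal s \<Longrightarrow> \<phi> x0 + \<alpha> * (a - 1) + d \<le> \<phi> y + \<alpha> * s"
    by (rule Gamma0_epigraph_separation[OF F]) blast
  have "0 < \<alpha>" using sep[of x0 a] a d by (simp add: algebra_simps)
  then obtain \<eta> :: "'a \<Rightarrow>\<^sub>L real" where \<eta>: "ereal (a - 1) < ereal (\<eta> x0) - fconj F \<eta>"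
    using fconj_witness_of_nonvertical_separation[OF proper \<open>0 < \<alpha>\<close> d sep] by blast
  moreover have "ereal (\<eta> x0 - a) \<le> fconj F \<eta>" using fconj_upper[of \<eta> x0 F] a by simp
  ultimately show ?thesis using that by (cases "fconj F \<eta>") auto
qed

lemma fenchel_moreau:
  fixes F :: "'a::real_normed_vector \<Rightarrow> ereal"
  assumes F: "Gamma0 F" and "ereal r < F x"
  shows "\<exists>\<eta>. ereal r < ereal (blinfun_apply \<eta> x) - fconj F \<eta>"
proof -
  have proper: "proper_fun F" using F unfolding Gamma0_def by blast
  obtain \<phi> :: "'a \<Rightarrow>\<^sub>L real" and \<alpha> d where d: "0 < d" and "0 \<le> \<alpha>"
    and sep: "\<And>y s. F y \<le> ereal s \<Longrightarrow> \<phi> x + \<alpha> * r + d \<le> \<phi> y + \<alpha> * s"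
    by (rule Gamma0_epigraph_separation[OF assms]) blast
  show ?thesis
  proof (cases "\<alpha> = 0")
    case False
    with \<open>0 \<le> \<alpha>\<close> have "0 < \<alpha>" by simp
    then show ?thesis
      using fconj_witness_of_nonvertical_separation[OF proper _ d sep] by blast
  next
    case True
    \<comment> \<open>The separating hyperplane is vertical; tilt it by a large multiple of \<open>\<phi>\<close> added to a
      functional \<open>\<eta>0\<close> at which the conjugate is finite.\<close>
    obtain \<eta>0 b where b: "fconj F \<eta>0 = ereal b" using F by (rule Gamma0_fconj_finite_point)
    define t where "t = max 0 ((r - \<eta>0 x + b) / d + 1)"
    define \<eta> where "\<eta> = \<eta>0 - t *\<^sub>R \<phi>"
    have "fconj F \<eta> \<le> ereal (b - t * (\<phi> x + d))"
    proof (rule proper_fconj_leI[OF proper])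
      fix y s assume s: "F y = ereal s"
      have "\<eta>0 y - s \<le> b" using fconj_upper[of \<eta>0 y F] s b by simp
      moreover have "t * (\<phi> x + d) \<le> t * \<phi> y"
        using sep[of y s] s True by (simp add: t_def mult_left_mono)
      ultimately show "\<eta> y - s \<le> b - t * (\<phi> x + d)"
        unfolding \<eta>_def by (simp add: blinfun.diff_left scaleR_blinfun.rep_eq)
    qed
    moreover have "r < \<eta> x - (b - t * (\<phi> x + d))"
    proof -
      have "r - \<eta>0 x + b + d \<le> t * d"
        using d by (simp add: t_def field_simps max_def)
      then show ?thesis
        using d unfolding \<eta>_def by (simp add: blinfun.diff_left scaleR_blinfun.rep_eq algebra_simps)
    qed
    ultimately have "ereal r < ereal (\<eta> x) - fconj F \<eta>"
      by (cases "fconj F \<eta>") auto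
    then show ?thesis by blast
  qed
qed

section \<open>Subgradients\<close>

lemma subdiff_fenchel_young:
  assumes "proper_fun F" and \<zeta>: "\<zeta> \<in> subdiff F u"
  obtains a where "F u = ereal a" and "fconj F \<zeta> = ereal (\<zeta> u - a)"
proof -
  obtain x0 a0 where a0: "F x0 = ereal a0" using assms(1) by (rule proper_fun_finite_point)
  have "F u + ereal (\<zeta> (x0 - u)) \<le> F x0" using \<zeta> unfolding subdiff_def by blast
  then have "F u \<noteq> \<infinity>" using a0 by auto
  moreover have "F u \<noteq> -\<infinity>" using assms(1) unfolding proper_fun_def by blast
  ultimately obtain a where a: "F u = ereal a" by (cases "F u") auto
  have "fconj F \<zeta> = ereal (\<zeta> u - a)"
  proof (rule antisym)
    show "fconj F \<zeta> \<le> ereal (\<zeta> u - a)"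
    proof (rule fconj_least)
      fix v
      have "ereal (a + \<zeta> (v - u)) \<le> F v" using \<zeta> a unfolding subdiff_def by simp
      then show "ereal (\<zeta> v) - F v \<le> ereal (\<zeta> u - a)"
        by (cases "F v") (auto simp: blinfun.diff_right)
    qed
    show "ereal (\<zeta> u - a) \<le> fconj F \<zeta>" using fconj_upper[of \<zeta> u F] a by simp
  qed
  then show ?thesis using a that by blast
qed

lemma dsubdiff_fconj_iff_subdiff:
  fixes F :: "'a::real_normed_vector \<Rightarrow> ereal"
  assumes F: "Gamma0 F"
  shows "u \<in> dsubdiff (fconj F) \<zeta> \<longleftrightarrow> \<zeta> \<in> subdiff F u"
proof
  have proper: "proper_fun F" using F unfolding Gamma0_def by blast
  assume "u \<in> dsubdiff (fconj F) \<zeta>"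
  then have dual: "fconj F \<zeta> + ereal ((\<eta> - \<zeta>) u) \<le> fconj F \<eta>" for \<eta>
    unfolding dsubdiff_def by blast
  obtain \<eta>0 b where b: "fconj F \<eta>0 = ereal b" using F by (rule Gamma0_fconj_finite_point)
  obtain x0 a0 where a0: "F x0 = ereal a0" using proper by (rule proper_fun_finite_point)
  have "fconj F \<zeta> \<noteq> \<infinity>" using dual[of \<eta>0] b by auto
  moreover have "fconj F \<zeta> \<noteq> -\<infinity>" using fconj_upper[of \<zeta> x0 F] a0 by auto
  ultimately obtain c where c: "fconj F \<zeta> = ereal c" by (cases "fconj F \<zeta>") auto
  have Fu: "F u \<le> ereal (\<zeta> u - c)"
  proof (rule ccontr)
    assume "\<not> F u \<le> ereal (\<zeta> u - c)"
    then obtain \<eta> :: "'a \<Rightarrow>\<^sub>L real" where "ereal (\<zeta> u - c) < ereal (\<eta> u) - fconj F \<eta>"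
      using fenchel_moreau[OF F] by (meson not_le)
    moreover have "ereal (c + (\<eta> u - \<zeta> u)) \<le> fconj F \<eta>"
      using dual[of \<eta>] c by (simp add: minus_blinfun.rep_eq)
    ultimately show False by (cases "fconj F \<eta>") auto
  qed
  show "\<zeta> \<in> subdiff F u"
    unfolding subdiff_def
  proof (intro CollectI allI)
    fix v
    have "F u + ereal (\<zeta> (v - u)) \<le> ereal (\<zeta> u - c) + ereal (\<zeta> (v - u))"
      using Fu by (rule add_right_mono)
    also have "\<dots> = ereal (\<zeta> v - c)" by (simp add: blinfun.diff_right)
    also have "\<dots> \<le> F v" using fconj_upper[of \<zeta> v F] c by (cases "F v") auto
    finally show "F u + ereal (\<zeta> (v - u)) \<le> F v" .
  qed
next
  assume "\<zeta> \<in> subdiff F u"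
  then obtain a where a: "F u = ereal a" and c: "fconj F \<zeta> = ereal (\<zeta> u - a)"
    using subdiff_fenchel_young F unfolding Gamma0_def by blast
  show "u \<in> dsubdiff (fconj F) \<zeta>"
    unfolding dsubdiff_def
  proof (intro CollectI allI)
    fix \<eta>
    have "fconj F \<zeta> + ereal ((\<eta> - \<zeta>) u) = ereal (\<eta> u) - F u"
      using a c by (simp add: minus_blinfun.rep_eq)
    also have "\<dots> \<le> fconj F \<eta>" by (rule fconj_upper)
    finally show "fconj F \<zeta> + ereal ((\<eta> - \<zeta>) u) \<le> fconj F \<eta>" .
  qed
qed

lemma subdiff_real_iff:
  "\<eta> \<in> subdiff (\<lambda>v. ereal (f v)) u \<longleftrightarrow> (\<forall>v. \<eta> v - f v \<le> \<eta> u - f u)"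
  unfolding subdiff_def by (auto simp: blinfun.diff_right algebra_simps)

lemma homogeneous_subdiff_euler:
  fixes h :: "'a::real_normed_vector \<Rightarrow> real"
  assumes hom: "\<And>t v. h (t *\<^sub>R v) = \<bar>t\<bar> powr p * h v"
    and "\<eta> \<in> subdiff (\<lambda>v. ereal (h v)) u"
  shows "\<eta> u = p * h u"
proof -
  define f where "f t = t * \<eta> u - t powr p * h u" for t :: real
  have "(f has_real_derivative (\<eta> u - p * 1 powr (p - 1) * h u)) (at 1)"
    unfolding f_def by (auto intro!: derivative_eq_intros)
  moreover have "f t \<le> f 1" if "\<bar>1 - t\<bar> < 1/2" for t
  proof -
    have "0 < t" using that by (simp add: abs_if split: if_splits)
    then show ?thesis
      using assms(2) hom[of t u] unfolding subdiff_real_iff f_def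
      by (auto simp: blinfun.scaleR_right dest: spec[of _ "t *\<^sub>R u"])
  qed
  ultimately have "\<eta> u - p * 1 powr (p - 1) * h u = 0"
    by (intro DERIV_local_max[of f _ 1 "1/2"]) auto
  then show ?thesis by simp
qed

lemma homogeneous_subdiff_scaleR:
  fixes h :: "'a::real_normed_vector \<Rightarrow> real"
  assumes hom: "\<And>t v. h (t *\<^sub>R v) = \<bar>t\<bar> powr p * h v"
    and \<sigma>: "0 < \<sigma>" and "\<eta> \<in> subdiff (\<lambda>v. ereal (h v)) u"
  shows "\<sigma> powr (p - 1) *\<^sub>R \<eta> \<in> subdiff (\<lambda>v. ereal (h v)) (\<sigma> *\<^sub>R u)"
  unfolding subdiff_real_iff
proof
  fix x :: 'a
  define y where "y = inverse \<sigma> *\<^sub>R x"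
  have x: "x = \<sigma> *\<^sub>R y" unfolding y_def using \<sigma> by simp
  have \<sigma>p: "\<sigma> powr (p - 1) * \<sigma> = \<sigma> powr p" using \<sigma> by (simp add: powr_diff)
  have scaled: "(\<sigma> powr (p - 1) *\<^sub>R \<eta>) (\<sigma> *\<^sub>R w) - h (\<sigma> *\<^sub>R w) = \<sigma> powr p * (\<eta> w - h w)" for w
    using \<sigma> hom[of \<sigma> w] \<sigma>p by (simp add: blinfun.scaleR_right scaleR_blinfun.rep_eq algebra_simps)
  have "\<sigma> powr p * (\<eta> y - h y) \<le> \<sigma> powr p * (\<eta> u - h u)"
    using assms(3) \<sigma> unfolding subdiff_real_iff by (intro mult_left_mono) auto
  then show "(\<sigma> powr (p - 1) *\<^sub>R \<eta>) x - h x \<le> (\<sigma> powr (p - 1) *\<^sub>R \<eta>) (\<sigma> *\<^sub>R u) - h (\<sigma> *\<^sub>R u)"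
    unfolding x scaled .
qed

lemma homogeneous_subdiff_scaleR_iff:
  fixes h :: "'a::real_normed_vector \<Rightarrow> real"
  assumes hom: "\<And>t v. h (t *\<^sub>R v) = \<bar>t\<bar> powr p * h v" and \<sigma>: "0 < \<sigma>"
  shows "\<sigma> powr (p - 1) *\<^sub>R \<eta> \<in> subdiff (\<lambda>v. ereal (h v)) (\<sigma> *\<^sub>R u)
           \<longleftrightarrow> \<eta> \<in> subdiff (\<lambda>v. ereal (h v)) u"
proof
  assume "\<sigma> powr (p - 1) *\<^sub>R \<eta> \<in> subdiff (\<lambda>v. ereal (h v)) (\<sigma> *\<^sub>R u)"
  from homogeneous_subdiff_scaleR[OF hom _ this, of "inverse \<sigma>"]
  have "(inverse \<sigma> powr (p - 1) * \<sigma> powr (p - 1)) *\<^sub>R \<eta> \<in> subdiff (\<lambda>v. ereal (h v)) u"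
    using \<sigma> by simp
  moreover have "inverse \<sigma> powr (p - 1) * \<sigma> powr (p - 1) = 1"
    using \<sigma> by (simp add: powr_mult[symmetric])
  ultimately show "\<eta> \<in> subdiff (\<lambda>v. ereal (h v)) u" by simp
qed (rule homogeneous_subdiff_scaleR[OF hom \<sigma>])

lemma homogeneous_fconj:
  fixes h :: "'a::real_normed_vector \<Rightarrow> real"
  assumes hom: "\<And>t v. h (t *\<^sub>R v) = \<bar>t\<bar> powr p * h v"
    and \<eta>: "\<eta> \<in> subdiff (\<lambda>v. ereal (h v)) u"
  shows "fconj (\<lambda>v. ereal (h v)) \<eta> = ereal ((p - 1) * h u)"
proof -
  have "proper_fun (\<lambda>v. ereal (h v))" unfolding proper_fun_def by simp
  then obtain a where "ereal (h u) = ereal a" and "fconj (\<lambda>v. ereal (h v)) \<eta> = ereal (\<eta> u - a)"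
    using \<eta> by (rule subdiff_fenchel_young)
  then show ?thesis
    using homogeneous_subdiff_euler[OF hom \<eta>] by (simp add: algebra_simps)
qed

section \<open>Duality of eigenvectors\<close>

lemma mem_scaleR_image_iff:
  fixes x :: "'a::real_vector"
  assumes "c \<noteq> 0"
  shows "x \<in> (\<lambda>y. c *\<^sub>R y) ` S \<longleftrightarrow> inverse c *\<^sub>R x \<in> S"
proof
  assume "x \<in> (\<lambda>y. c *\<^sub>R y) ` S"
  then obtain y where "y \<in> S" and "x = c *\<^sub>R y" by blast
  then show "inverse c *\<^sub>R x \<in> S" using assms by simp
next
  assume "inverse c *\<^sub>R x \<in> S"
  moreover have "x = c *\<^sub>R (inverse c *\<^sub>R x)" using assms by simp
  ultimately show "x \<in> (\<lambda>y. c *\<^sub>R y) ` S" by (rule rev_image_eqI)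
qed

lemma H_is_norm_real_valued:
  assumes "abs_p_homogeneous p H" and "H_is_norm p H"
  obtains h where "H = (\<lambda>v. ereal (h v))" and "\<And>t v. h (t *\<^sub>R v) = \<bar>t\<bar> powr p * h v"
    and "\<And>v. v \<noteq> 0 \<Longrightarrow> 0 < h v"
proof
  define h where "h v = real_of_ereal (H v)" for v
  have H_finite: "\<forall>v. H v \<noteq> \<infinity> \<and> H v \<noteq> -\<infinity> \<and> 0 \<le> H v"
    using assms(2) unfolding H_is_norm_def by (rule conjunct1)
  have Hnorm_zero: "\<forall>v. Hnorm p H v = 0 \<longleftrightarrow> v = 0"
    using assms(2) unfolding H_is_norm_def by (rule conjunct1[OF conjunct2])
  show "H = (\<lambda>v. ereal (h v))"
  proof
    fix v
    show "H v = ereal (h v)" using H_finite unfolding h_def by (cases "H v") auto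
  qed
  show "h (t *\<^sub>R v) = \<bar>t\<bar> powr p * h v" for t v
    using assms(1) unfolding abs_p_homogeneous_def h_def by simp
  show "0 < h v" if "v \<noteq> 0" for v
  proof -
    have "Hnorm p H v \<noteq> 0" using Hnorm_zero that by simp
    then have "h v \<noteq> 0" unfolding Hnorm_def h_def by auto
    moreover have "0 \<le> h v" using H_finite unfolding h_def by (simp add: real_of_ereal_pos)
    ultimately show ?thesis by simp
  qed
qed

lemma rayleigh_eq_iff_dual_rayleigh_eq:
  fixes J :: "'a::real_normed_vector \<Rightarrow> ereal" and h :: "'a \<Rightarrow> real"
  assumes hom: "\<And>t v. h (t *\<^sub>R v) = \<bar>t\<bar> powr p * h v" and p: "1 < p"
    and "proper_fun J" and \<sigma>: "0 < \<sigma>" and hu: "0 < h u"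
    and J: "\<zeta> \<in> subdiff J u" and H: "\<zeta> \<in> subdiff (\<lambda>v. ereal (h v)) (\<sigma> *\<^sub>R u)"
  shows "rayleigh J (\<lambda>v. ereal (h v)) u = ereal (\<sigma> powr (p - 1))
           \<longleftrightarrow> dual_rayleigh J (\<lambda>v. ereal (h v)) \<zeta> = ereal (inverse \<sigma>)"
proof -
  define lam where "lam = \<sigma> powr (p - 1)"
  have lam: "0 < lam" unfolding lam_def using \<sigma> by simp
  have \<sigma>_p: "\<sigma> powr p = \<sigma> * lam"
    unfolding lam_def using \<sigma> by (simp add: powr_diff)
  obtain a where a: "J u = ereal a" and J_conj: "fconj J \<zeta> = ereal (\<zeta> u - a)"
    using assms(3) J by (rule subdiff_fenchel_young)
  have h_\<sigma>u: "h (\<sigma> *\<^sub>R u) = \<sigma> * lam * h u" using hom[of \<sigma> u] \<sigma> \<sigma>_p by simp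
  have "\<sigma> * \<zeta> u = p * (\<sigma> * lam * h u)"
    using homogeneous_subdiff_euler[OF hom H] h_\<sigma>u by (simp add: blinfun.scaleR_right)
  then have \<zeta>u: "\<zeta> u = p * lam * h u" using \<sigma> by simp
  have H_conj: "fconj (\<lambda>v. ereal (h v)) \<zeta> = ereal ((p - 1) * (\<sigma> * lam * h u))"
    using homogeneous_fconj[OF hom H] h_\<sigma>u by simp
  have den: "0 < (p - 1) * (\<sigma> * lam * h u)" using p \<sigma> lam hu by simp
  have "a / h u = lam \<longleftrightarrow> a = lam * h u" using hu by (simp add: field_simps)
  also have "\<dots> \<longleftrightarrow> \<zeta> u - a = (p - 1) * lam * h u" unfolding \<zeta>u by (auto simp: algebra_simps)
  also have "(p - 1) * lam * h u = inverse \<sigma> * ((p - 1) * (\<sigma> * lam * h u))"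
    using \<sigma> by simp
  also have "\<zeta> u - a = \<dots> \<longleftrightarrow> (\<zeta> u - a) / ((p - 1) * (\<sigma> * lam * h u)) = inverse \<sigma>"
    using den by (intro nonzero_divide_eq_eq[symmetric]) linarith
  finally show ?thesis
    unfolding rayleigh_def dual_rayleigh_def a J_conj H_conj lam_def[symmetric]
    using hu den \<sigma> by simp
qed

theorem theorem2p1:
  fixes J H :: "'a::banach \<Rightarrow> ereal"
    and p q lam :: real and u :: 'a and \<zeta> :: "'a \<Rightarrow>\<^sub>L real"
  assumes "reflexive_space TYPE('a)"
    and "1 < p" and "q = p / (p - 1)"
    and "Gamma0 J" and "Gamma0 H"
    and "abs_p_homogeneous p H" and "H_is_norm p H"
    and "\<exists>c>0. \<forall>v. H v \<le> ereal c * J v"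
    and "u \<noteq> 0" and "\<zeta> \<noteq> 0" and "lam > 0"
  shows "p_eigenvector J H u \<zeta> lam \<longleftrightarrow> q_eigenvector J H \<zeta> u (lam powr (1 - q))"
proof -
  obtain h where H: "H = (\<lambda>v. ereal (h v))" and hom: "\<And>t v. h (t *\<^sub>R v) = \<bar>t\<bar> powr p * h v"
    and h_pos: "0 < h u"
    using H_is_norm_real_valued[OF assms(6,7)] assms(9) by metis
  define \<sigma> where "\<sigma> = lam powr (q - 1)"
  have \<sigma>: "0 < \<sigma>" unfolding \<sigma>_def using assms(11) by simp
  have "(q - 1) * (p - 1) = 1" using assms(2,3) by (simp add: field_simps)
  then have \<sigma>_lam: "\<sigma> powr (p - 1) = lam" and \<mu>: "lam powr (1 - q) = inverse \<sigma>"
    unfolding \<sigma>_def using assms(11) by (simp_all add: powr_powr powr_minus[symmetric])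
  have "lam \<noteq> 0" using assms(11) by simp
  then have primal: "\<zeta> \<in> (\<lambda>\<eta>. lam *\<^sub>R \<eta>) ` subdiff H u \<longleftrightarrow> \<zeta> \<in> subdiff H (\<sigma> *\<^sub>R u)"
    using homogeneous_subdiff_scaleR_iff[OF hom \<sigma>, of "inverse lam *\<^sub>R \<zeta>" u]
    unfolding H mem_scaleR_image_iff[OF \<open>lam \<noteq> 0\<close>] \<sigma>_lam by simp
  have dual: "u \<in> (\<lambda>v. inverse \<sigma> *\<^sub>R v) ` dsubdiff (fconj H) \<zeta> \<longleftrightarrow> \<zeta> \<in> subdiff H (\<sigma> *\<^sub>R u)"
    using dsubdiff_fconj_iff_subdiff[OF assms(5)] \<sigma> by (simp add: mem_scaleR_image_iff)
  have quotients: "rayleigh J H u = ereal lam \<longleftrightarrow> dual_rayleigh J H \<zeta> = ereal (inverse \<sigma>)"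
    if "\<zeta> \<in> subdiff J u" and "\<zeta> \<in> subdiff H (\<sigma> *\<^sub>R u)"
    using rayleigh_eq_iff_dual_rayleigh_eq[OF hom assms(2) _ \<sigma> h_pos] that assms(4)
    unfolding H \<sigma>_lam Gamma0_def by blast
  show ?thesis
    unfolding p_eigenvector_def q_eigenvector_def \<mu> primal dual
      dsubdiff_fconj_iff_subdiff[OF assms(4)]
    using quotients assms(9,10) by blast
qed

end
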